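(* If $M\in\mathcal{D}_2$, then the set $P$ of all isolated points of $M$ is discrete.
   Context: A function on an open convex set $C\subset\mathbb{R}^d$ is DC if it is the difference of two convex functions on $C$. $\mathcal{D}_2$ denotes the family consisting of $\varnothing$ together with all nonempty closed sets $A\subset\mathbb{R}^2$ whose distance function $d_A=\operatorname{dist}(\cdot,A)$ is DC on $\mathbb{R}^2$. A set $D\subset\mathbb{R}^2$ is discrete if each point of $\mathbb{R}^2$ has a neighbourhood containing at most one point of $D$. *)

theory Defs
  imports "HOL-Analysis.Analysis"
begin

definition DC_on :: "('a::real_normed_vector) set \<Rightarrow> ('a \<Rightarrow> real) \<Rightarrow> bool" where
  "DC_on C f \<longleftrightarrow> (\<exists>g h. convex_on C g \<and> convex_on C h \<and> (\<forall>x\<in>C. f x = g x - h x))"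

definition D2 :: "(real^2) set set" where
  "D2 = {A. A = {} \<or> (closed A \<and> DC_on UNIV (\<lambda>x. infdist x A))}"

definition isolated_points :: "('a::metric_space) set \<Rightarrow> 'a set" where
  "isolated_points M = {x\<in>M. \<exists>e>0. ball x e \<inter> M = {x}}"

definition discrete_set :: "('a::topological_space) set \<Rightarrow> bool" where
  "discrete_set D \<longleftrightarrow> (\<forall>z. \<exists>U. open U \<and> z \<in> U \<and> (\<forall>p\<in>U \<inter> D. \<forall>q\<in>U \<inter> D. p = q))"

end

theory Submission
  imports Defs
begin

text \<open>Write \<open>d\<^sub>M = g - h\<close> with \<open>g\<close>, \<open>h\<close> convex. Near an isolated point \<open>p\<close> of \<open>M\<close> we have
  \<open>d\<^sub>M x = \<parallel>x - p\<parallel>\<close>, so adding a subgradient inequality for \<open>h\<close> at \<open>p\<close> gives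
  \<open>g x \<ge> g p + \<langle>y, x - p\<rangle> + \<parallel>x - p\<parallel>\<close> near \<open>p\<close>, and by convexity of \<open>g\<close> for all \<open>x\<close>.
  Such sharp subgradients at distinct points are at distance at least 2, and they are bounded
  on bounded sets since \<open>g\<close> is locally bounded. Hence a bounded set of isolated points of \<open>M\<close>
  is mapped injectively onto a bounded uniformly discrete set, so it is finite.\<close>

definition subgradient :: "('a::real_inner \<Rightarrow> real) \<Rightarrow> 'a \<Rightarrow> 'a \<Rightarrow> bool" where
  "subgradient g p y \<longleftrightarrow> (\<forall>x. g p + inner y (x - p) \<le> g x)"

definition sharp_subgradient :: "('a::real_inner \<Rightarrow> real) \<Rightarrow> 'a \<Rightarrow> 'a \<Rightarrow> bool" where
  "sharp_subgradient g p y \<longleftrightarrow> (\<forall>x. g p + inner y (x - p) + norm (x - p) \<le> g x)"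

lemma sharp_subgradient_imp_subgradient:
  assumes "sharp_subgradient g p y"
  shows "subgradient g p y"
  unfolding subgradient_def
proof
  fix x
  have "g p + inner y (x - p) + norm (x - p) \<le> g x"
    using assms by (simp add: sharp_subgradient_def)
  then show "g p + inner y (x - p) \<le> g x" using norm_ge_zero[of "x - p"] by linarith
qed

text \<open>The subgradient comes from a hyperplane separating the epigraph of \<open>h\<close> from the open
  vertical ray below \<open>(p, h p)\<close>.\<close>

lemma convex_on_subgradient:
  fixes h :: "'a::euclidean_space \<Rightarrow> real"
  assumes "convex_on UNIV h"
  obtains y where "subgradient h p y"
proof -
  let ?E = "epigraph UNIV h" and ?R = "{p} \<times> {..<h p}"
  have "convex ?E" using assms by (rule convex_epigraphI)
  moreover have "convex ?R" by (intro convex_Times) auto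
  moreover have "(p, h p) \<in> ?E" "(p, h p - 1) \<in> ?R" by (auto simp: epigraph_def)
  moreover have "?E \<inter> ?R = {}" by (auto simp: epigraph_def)
  ultimately obtain a b where "a \<noteq> 0" and E: "\<forall>z\<in>?E. inner a z \<le> b" and R: "\<forall>z\<in>?R. b \<le> inner a z"
    using separating_hyperplane_sets[of ?E ?R] by blast
  obtain a1 a0 where a: "a = (a1, a0)" by fastforce
  have below: "inner a1 x + a0 * t \<le> b" if "h x \<le> t" for x t
    using E that by (auto simp: a epigraph_def inner_Pair)
  have above: "b \<le> inner a1 p + a0 * t" if "t < h p" for t
    using R that by (auto simp: a inner_Pair)
  have "a0 \<le> 0"
    using below[of p "h p + 1"] above[of "h p - 1"] by (simp add: algebra_simps)
  moreover have "a0 \<noteq> 0"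
  proof
    assume "a0 = 0"
    with \<open>a \<noteq> 0\<close> have "a1 \<noteq> 0" by (simp add: a zero_prod_def)
    have "inner a1 (p + a1) \<le> inner a1 p"
      using below[of "p + a1" "h (p + a1)"] above[of "h p - 1"] \<open>a0 = 0\<close> by simp
    then have "inner a1 a1 \<le> 0" by (simp add: inner_add_right)
    with \<open>a1 \<noteq> 0\<close> show False using inner_gt_zero_iff[of a1] by linarith
  qed
  ultimately have "a0 < 0" by simp
  have "h p \<le> (b - inner a1 p) / a0"
  proof (rule dense_le)
    fix t assume "t < h p"
    then have "b - inner a1 p \<le> t * a0" using above[of t] by (simp add: mult.commute)
    with \<open>a0 < 0\<close> show "t \<le> (b - inner a1 p) / a0" by (simp add: neg_le_divide_eq)
  qed
  with \<open>a0 < 0\<close> have "b - inner a1 p \<le> h p * a0" by (simp add: neg_le_divide_eq)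
  then have at_p: "b \<le> inner a1 p + a0 * h p" by (simp add: mult.commute)
  have "subgradient h p (- (1 / a0) *\<^sub>R a1)"
    unfolding subgradient_def
  proof
    fix x
    have "inner a1 (x - p) \<le> (h x - h p) * (- a0)"
      using below[of x "h x"] at_p by (simp add: inner_diff_right algebra_simps)
    moreover have "0 < - a0" using \<open>a0 < 0\<close> by simp
    ultimately have "inner a1 (x - p) / (- a0) \<le> h x - h p"
      by (simp only: pos_divide_le_eq)
    then show "h p + inner (- (1 / a0) *\<^sub>R a1) (x - p) \<le> h x" by simp
  qed
  then show thesis by (rule that)
qed

lemma infdist_near_isolated_point:
  fixes M :: "'a::metric_space set"
  assumes "p \<in> isolated_points M"
  obtains e where "e > 0" "\<And>x. dist x p < e \<Longrightarrow> infdist x M = dist x p"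
proof -
  obtain e where "p \<in> M" "e > 0" and isolated: "ball p e \<inter> M = {p}"
    using assms by (auto simp: isolated_points_def)
  have "infdist x M = dist x p" if "dist x p < e / 2" for x
  proof (rule antisym)
    show "infdist x M \<le> dist x p" using \<open>p \<in> M\<close> by (rule infdist_le)
    have "\<forall>a\<in>M. dist x p \<le> dist x a"
    proof
      fix a assume "a \<in> M"
      show "dist x p \<le> dist x a"
      proof (cases "a = p")
        case False
        with isolated \<open>a \<in> M\<close> have "a \<notin> ball p e" by blast
        then have "e \<le> dist p a" by simp
        also have "\<dots> \<le> dist x p + dist x a" by (rule dist_triangle3)
        finally show ?thesis using \<open>dist x p < e / 2\<close> by linarith
      qed simp
    qed
    moreover have "M \<noteq> {}" using \<open>p \<in> M\<close> by blast
    ultimately show "dist x p \<le> infdist x M"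
      unfolding infdist_def by (auto intro: cINF_greatest)
  qed
  then show thesis using \<open>e > 0\<close> by (intro that[of "e / 2"]) auto
qed

lemma sharp_subgradient_if_local:
  fixes g :: "'a::real_inner \<Rightarrow> real"
  assumes "convex_on UNIV g" "e > 0"
    and local: "\<And>x. norm (x - p) < e \<Longrightarrow> g p + inner y (x - p) + norm (x - p) \<le> g x"
  shows "sharp_subgradient g p y"
  unfolding sharp_subgradient_def
proof
  fix x
  show "g p + inner y (x - p) + norm (x - p) \<le> g x"
  proof (cases "x = p")
    case False
    define t where "t = min 1 (e / (2 * norm (x - p)))"
    have "0 < t" "t \<le> 1" using False \<open>e > 0\<close> by (auto simp: t_def)
    have "norm (t *\<^sub>R (x - p)) = t * norm (x - p)" using \<open>0 < t\<close> by simp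
    also have "\<dots> \<le> e / (2 * norm (x - p)) * norm (x - p)"
      by (intro mult_right_mono) (auto simp: t_def)
    also have "\<dots> = e / 2" using False by simp
    finally have "norm (t *\<^sub>R (x - p)) \<le> e / 2" .
    have xt: "(1 - t) *\<^sub>R p + t *\<^sub>R x = p + t *\<^sub>R (x - p)" by (simp add: algebra_simps)
    have "g p + t * (inner y (x - p) + norm (x - p)) \<le> g (p + t *\<^sub>R (x - p))"
      using local[of "p + t *\<^sub>R (x - p)"] \<open>norm (t *\<^sub>R (x - p)) \<le> e / 2\<close> \<open>e > 0\<close> \<open>0 < t\<close>
      by (simp add: distrib_left)
    also have "\<dots> \<le> (1 - t) * g p + t * g x"
      unfolding xt[symmetric] using \<open>0 < t\<close> \<open>t \<le> 1\<close> by (intro convex_onD[OF assms(1)]) auto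
    finally have "t * (g p + inner y (x - p) + norm (x - p)) \<le> t * g x"
      by (simp add: algebra_simps)
    with \<open>0 < t\<close> show ?thesis by simp
  qed simp
qed

lemma DC_infdist_sharp_subgradient:
  fixes M :: "'a::euclidean_space set"
  assumes "convex_on UNIV g" "convex_on UNIV h"
    and DC: "\<And>x. infdist x M = g x - h x"
    and "p \<in> isolated_points M"
  obtains y where "sharp_subgradient g p y"
proof -
  obtain y where y: "subgradient h p y" using convex_on_subgradient[OF assms(2)] .
  obtain e where "e > 0" and near: "\<And>x. dist x p < e \<Longrightarrow> infdist x M = dist x p"
    using infdist_near_isolated_point[OF assms(4)] by blast
  have "g p = h p" using DC[of p] near[of p] \<open>e > 0\<close> by simp
  have "g p + inner y (x - p) + norm (x - p) \<le> g x" if "norm (x - p) < e" for x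
    using that near[of x] DC[of x] y[unfolded subgradient_def, rule_format, of x] \<open>g p = h p\<close>
    by (simp add: dist_norm)
  then show thesis using sharp_subgradient_if_local[OF assms(1) \<open>e > 0\<close>] that by blast
qed

lemma sharp_subgradients_separated:
  assumes "sharp_subgradient g p y" "sharp_subgradient g q z" "p \<noteq> q"
  shows "2 \<le> dist y z"
proof -
  have "g p + inner y (q - p) + norm (q - p) \<le> g q" "g q + inner z (p - q) + norm (p - q) \<le> g p"
    using assms(1,2) by (auto simp: sharp_subgradient_def)
  then have "2 * norm (q - p) \<le> inner (z - y) (q - p)"
    by (simp add: inner_diff_left inner_diff_right norm_minus_commute)
  also have "\<dots> \<le> norm (z - y) * norm (q - p)" by (rule norm_cauchy_schwarz)
  finally show ?thesis using \<open>p \<noteq> q\<close> by (simp add: dist_norm norm_minus_commute)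
qed

lemma subgradient_norm_le:
  fixes g :: "'a::real_inner \<Rightarrow> real"
  assumes "subgradient g p y" and bound: "\<And>x. dist p x \<le> 1 \<Longrightarrow> \<bar>g x\<bar> \<le> C"
  shows "norm y \<le> 2 * C"
proof (cases "y = 0")
  case True
  then show ?thesis using bound[of p] by simp
next
  case False
  define x where "x = p + (1 / norm y) *\<^sub>R y"
  have "inner y (x - p) = norm y"
    using False by (simp add: x_def power2_norm_eq_inner[symmetric] power2_eq_square)
  with assms(1) have "g p + norm y \<le> g x" by (metis subgradient_def)
  moreover have "dist p x \<le> 1" using False by (simp add: x_def dist_norm)
  ultimately show ?thesis using bound[of p] bound[of x] by simp
qed

lemma finite_if_sharp_subgradients:
  fixes g :: "'a::euclidean_space \<Rightarrow> real"
  assumes "continuous_on UNIV g" "bounded P" "\<And>p. p \<in> P \<Longrightarrow> \<exists>y. sharp_subgradient g p y"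
  shows "finite P"
proof -
  obtain Y where Y: "\<And>p. p \<in> P \<Longrightarrow> sharp_subgradient g p (Y p)" using assms(3) by metis
  obtain c r where "P \<subseteq> cball c r" using \<open>bounded P\<close> bounded_subset_cball by blast
  have "compact (g ` cball c (r + 1))"
    using assms(1) by (intro compact_continuous_image) (auto intro: continuous_on_subset)
  then obtain C where C: "\<And>x. x \<in> cball c (r + 1) \<Longrightarrow> \<bar>g x\<bar> \<le> C"
    by (meson bounded_real compact_imp_bounded imageI)
  have "norm (Y p) \<le> 2 * C" if "p \<in> P" for p
  proof (rule subgradient_norm_le)
    show "subgradient g p (Y p)" using Y[OF that] by (rule sharp_subgradient_imp_subgradient)
    fix x assume "dist p x \<le> 1"
    moreover have "dist c p \<le> r" using \<open>P \<subseteq> cball c r\<close> that by auto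
    ultimately have "x \<in> cball c (r + 1)" using dist_triangle[of c x p] by simp
    then show "\<bar>g x\<bar> \<le> C" by (rule C)
  qed
  then have "bounded (Y ` P)" by (auto simp: bounded_iff)
  moreover have "uniform_discrete (Y ` P)"
  proof (rule uniformI2[of 2])
    fix u v assume "u \<in> Y ` P" "v \<in> Y ` P" "u \<noteq> v"
    then show "2 \<le> dist u v" using Y sharp_subgradients_separated by blast
  qed simp
  ultimately have "finite (Y ` P)" using uniform_discrete_finite_iff by blast
  moreover have "inj_on Y P"
    using Y sharp_subgradients_separated by (fastforce intro: inj_onI)
  ultimately show ?thesis by (rule finite_imageD)
qed

lemma no_limpt_imp_discrete_set:
  assumes "\<And>z. \<not> z islimpt D"
  shows "discrete_set D"
  unfolding discrete_set_def
proof
  fix z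
  from assms[of z] obtain U where "open U" "z \<in> U" "\<forall>y\<in>D. y \<in> U \<longrightarrow> y = z"
    unfolding islimpt_def by blast
  then show "\<exists>U. open U \<and> z \<in> U \<and> (\<forall>p\<in>U \<inter> D. \<forall>q\<in>U \<inter> D. p = q)" by blast
qed

lemma bounded_finite_imp_discrete_set:
  fixes D :: "'a::metric_space set"
  assumes "\<And>B. B \<subseteq> D \<Longrightarrow> bounded B \<Longrightarrow> finite B"
  shows "discrete_set D"
proof (rule no_limpt_imp_discrete_set)
  fix z
  have "\<not> z islimpt D \<inter> ball z 1"
    using assms[of "D \<inter> ball z 1"] islimpt_finite by blast
  then show "\<not> z islimpt D"
    using islimpt_Int_eventually[OF _ eventually_at_in_open'[of "ball z 1" z]] by auto
qed

theorem corollary4p13: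
  fixes M :: "(real^2) set"
  assumes "M \<in> D2"
  shows "discrete_set (isolated_points M)"
proof (cases "M = {}")
  case True
  then show ?thesis by (auto simp: isolated_points_def intro: bounded_finite_imp_discrete_set)
next
  case False
  then obtain g h where g: "convex_on UNIV g" and h: "convex_on UNIV h"
    and DC: "\<And>x. infdist x M = g x - h x"
    using assms by (auto simp: D2_def DC_on_def)
  have "continuous_on UNIV g" using g by (rule convex_on_continuous[OF open_UNIV])
  show ?thesis
  proof (rule bounded_finite_imp_discrete_set)
    fix B assume "B \<subseteq> isolated_points M" "bounded B"
    show "finite B"
    proof (rule finite_if_sharp_subgradients[OF \<open>continuous_on UNIV g\<close> \<open>bounded B\<close>])
      fix p assume "p \<in> B"
      with \<open>B \<subseteq> isolated_points M\<close> have "p \<in> isolated_points M" by blast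
      then obtain y where "sharp_subgradient g p y" by (rule DC_infdist_sharp_subgradient[OF g h DC])
      then show "\<exists>y. sharp_subgradient g p y" ..
    qed
  qed
qed

end
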